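(* For all $n,m,N\in\mathbb{Z}$ the following bilinear equations hold: \begin{align*} &(Q^{4n-8m+4}{\alpha_1}^{-4}{\alpha_2}^{4}-Q^{4n+4m}{\alpha_0}^{4}{\alpha_2}^{-4}) \left(\tau^{n,m}_{N}\right)^2 +Q^{n+m}\alpha_0{\alpha_2}^{-1}\tau^{n+1,m+1}_{N}\tau^{n-1,m-1}_{N} -Q^{n-2m+1}{\alpha_1}^{-1}\alpha_2\tau^{n,m+1}_{N}\tau^{n,m-1}_{N}=0,\\ &(Q^{4n+4m}{\alpha_0}^{4}{\alpha_2}^{-4}-Q^{-8n+4m-4}{\alpha_0}^{-4}{\alpha_1}^{4}) \left(\tau^{n,m}_{N}\right)^2 +Q^{-2n+m-1}{\alpha_0}^{-1}\alpha_1\tau^{n+1,m}_{N}\tau^{n-1,m}_{N} -Q^{n+m}\alpha_0{\alpha_2}^{-1}\tau^{n+1,m+1}_{N}\tau^{n-1,m-1}_{N}=0,\\ &(Q^{-8n+4m-4}{\alpha_0}^{-4}{\alpha_1}^{4}-Q^{4n-8m+4}{\alpha_1}^{-4}{\alpha_2}^{4}) \left(\tau^{n,m}_{N}\right)^2 -Q^{-2n+m-1}{\alpha_0}^{-1}\alpha_1\tau^{n+1,m}_{N}\tau^{n-1,m}_{N} +Q^{n-2m+1}{\alpha_1}^{-1}\alpha_2\tau^{n,m+1}_{N}\tau^{n,m-1}_{N}=0. \end{align*}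
   Context: Let $Q\in\mathbb{C}^\times$ be generic and let $\alpha_0,\alpha_1,\gamma$ be indeterminates; put $\alpha_2:=Q\alpha_0^{-1}\alpha_1^{-1}$, so $\alpha_0\alpha_1\alpha_2=Q$ (sixth roots of the usual parameters: $q=Q^6$, $a_i=\alpha_i^6$, $c=\gamma^6$). Let $\tau_i,\bar\tau_i$ ($i\in\mathbb{Z}/3\mathbb{Z}$) be six further indeterminates and $K=\mathbb{C}(\alpha_0,\alpha_1,\gamma,\tau_0,\tau_1,\tau_2,\bar\tau_0,\bar\tau_1,\bar\tau_2)$. Indices are taken mod 3. Define field automorphisms $s_0,s_1,s_2,\pi,w_0,w_1,r$ of $K$ (fixing $\mathbb{C}$): on parameters $s_i(\alpha_i)=\alpha_i^{-1}$, $s_i(\alpha_j)=\alpha_j\alpha_i$ ($j\neq i$), $\pi(\alpha_j)=\alpha_{j+1}$, $s_i(\gamma)=\pi(\gamma)=\gamma$; $w_0,w_1,r$ fix every $\alpha_j$, and $w_0(\gamma)=\gamma^{-1}$, $w_1(\gamma)=Q^{-2}\gamma^{-1}$, $r(\gamma)=Q^{-1}\gamma^{-1}$. With $u_i=Q^{-2}\gamma^{-4}\alpha_i^6$, $v_i=Q^{2}\gamma^{4}\alpha_i^6$: $s_i(\tau_i)=\dfrac{u_i\tau_{i+1}\bar\tau_{i-1}+\bar\tau_{i+1}\tau_{i-1}}{Q^{-1}\gamma^{-2}\alpha_i^{3}\,\bar\tau_i}$, $s_i(\bar\tau_i)=\dfrac{v_i\bar\tau_{i+1}\tau_{i-1}+\tau_{i+1}\bar\tau_{i-1}}{Q\gamma^{2}\alpha_i^{3}\,\tau_i}$,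 $s_i$ fixes $\tau_j,\bar\tau_j$ ($j\ne i$); $\pi(\tau_i)=\tau_{i+1}$, $\pi(\bar\tau_i)=\bar\tau_{i+1}$; $w_0(\tau_i)=\tau_i$, $w_0(\bar\tau_i)=\dfrac{\alpha_{i+1}^2(\bar\tau_i\tau_{i+1}\tau_{i+2}+u_{i-1}\tau_i\bar\tau_{i+1}\tau_{i+2}+u_{i+1}^{-1}\tau_i\tau_{i+1}\bar\tau_{i+2})}{\alpha_{i+2}^2\,\bar\tau_{i+1}\bar\tau_{i+2}}$; $w_1(\bar\tau_i)=\bar\tau_i$, $w_1(\tau_i)=\dfrac{\alpha_{i+1}^2(\tau_i\bar\tau_{i+1}\bar\tau_{i+2}+v_{i-1}\bar\tau_i\tau_{i+1}\bar\tau_{i+2}+v_{i+1}^{-1}\bar\tau_i\bar\tau_{i+1}\tau_{i+2})}{\alpha_{i+2}^2\,\tau_{i+1}\tau_{i+2}}$; $r(\tau_i)=\bar\tau_i$, $r(\bar\tau_i)=\tau_i$. Products of generators denote composition ($xy=x\circ y$). Set $T_1=\pi s_2s_1$, $T_2=s_1\pi s_2$, $T_4=rw_0$ (these commute), and define $\tau^{n,m}_N=T_1^{\,n}T_2^{\,m}T_4^{\,N}(\tau_1)$ for $n,m,N\in\mathbb{Z}$. *)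

theory Defs
  imports Complex_Main "HOL-Computational_Algebra.Polynomial" "HOL-Computational_Algebra.Fraction_Field"
begin

text \<open>K is built as an iterated rational function field C(x1)(x2)...(x9), which is
 isomorphic to the rational function field in nine indeterminates over C.
 Order of indeterminates: x1 = alpha0, x2 = alpha1, x3 = gamma, x4..x6 = tau0..tau2,
 x7..x9 = taubar0..taubar2.\<close>

type_synonym F1 = "complex poly fract"
type_synonym F2 = "F1 poly fract"
type_synonym F3 = "F2 poly fract"
type_synonym F4 = "F3 poly fract"
type_synonym F5 = "F4 poly fract"
type_synonym F6 = "F5 poly fract"
type_synonym F7 = "F6 poly fract"
type_synonym F8 = "F7 poly fract"
type_synonym K  = "F8 poly fract"

definition up :: "'a::idom \<Rightarrow> 'a poly fract" where
  "up c = Fract [:c:] 1"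

definition var :: "'a::idom poly fract" where
  "var = Fract [:0, 1:] 1"

definition cK :: "complex \<Rightarrow> K" where
  "cK c = up (up (up (up (up (up (up (up (up c))))))))"

definition X1 :: K where "X1 = up (up (up (up (up (up (up (up (var :: F1))))))))"
definition X2 :: K where "X2 = up (up (up (up (up (up (up (var :: F2)))))))"
definition X3 :: K where "X3 = up (up (up (up (up (up (var :: F3))))))"
definition X4 :: K where "X4 = up (up (up (up (up (var :: F4)))))"
definition X5 :: K where "X5 = up (up (up (up (var :: F5))))"
definition X6 :: K where "X6 = up (up (up (var :: F6)))"
definition X7 :: K where "X7 = up (up (var :: F7))"
definition X8 :: K where "X8 = up (var :: F8)"
definition X9 :: K where "X9 = (var :: K)"

definition gam :: K where "gam = X3"

definition tau :: "int \<Rightarrow> K" where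
  "tau i = (if i mod 3 = 0 then X4 else if i mod 3 = 1 then X5 else X6)"

definition taub :: "int \<Rightarrow> K" where
  "taub i = (if i mod 3 = 0 then X7 else if i mod 3 = 1 then X8 else X9)"

definition alpha :: "complex \<Rightarrow> int \<Rightarrow> K" where
  "alpha Q i = (if i mod 3 = 0 then X1 else if i mod 3 = 1 then X2
                else cK Q * inverse X1 * inverse X2)"

definition uu :: "complex \<Rightarrow> int \<Rightarrow> K" where
  "uu Q i = cK Q powi (-2) * gam powi (-4) * alpha Q i ^ 6"

definition vv :: "complex \<Rightarrow> int \<Rightarrow> K" where
  "vv Q i = cK Q ^ 2 * gam ^ 4 * alpha Q i ^ 6"

definition field_aut :: "(K \<Rightarrow> K) \<Rightarrow> bool" where
  "field_aut f \<longleftrightarrow> bij f \<and> (\<forall>x y. f (x + y) = f x + f y) \<and> (\<forall>x y. f (x * y) = f x * f y)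
     \<and> f 1 = 1 \<and> (\<forall>c. f (cK c) = cK c)"

definition zpow :: "('a \<Rightarrow> 'a) \<Rightarrow> int \<Rightarrow> 'a \<Rightarrow> 'a" where
  "zpow f n = (if 0 \<le> n then f ^^ nat n else (inv f) ^^ nat (- n))"

definition tauNM :: "(K \<Rightarrow> K) \<Rightarrow> (K \<Rightarrow> K) \<Rightarrow> (K \<Rightarrow> K) \<Rightarrow> int \<Rightarrow> int \<Rightarrow> int \<Rightarrow> K" where
  "tauNM T1 T2 T4 n m N = zpow T1 n (zpow T2 m (zpow T4 N (tau 1)))"

end

theory Submission
  imports Defs
begin

text \<open>The translations T1 = \<pi> s2 s1, T2 = s1 \<pi> s2 and T4 = r w0 are pairwise commuting
  automorphisms of K. This follows from the relations si^2 = 1, s0 s1 s0 = s1 s0 s1,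
  \<pi> si = s(i+1) \<pi> and the commutation of r and w0 with \<pi>, s1, s2, each of which only has to be
  checked on the nine generators of K. Hence tau^(n+a,m+b)_N is the image of tau^(a,b)_0 under
  T1^n T2^m T4^N, which multiplies alpha0, alpha1, alpha2 by Q^n, Q^(m-n), Q^(-m). The coefficients
  of the equations transform in the same way, so the equations at (n, m, N) are the images of
  those at the origin, where they are identities between explicit rational functions. The third
  equation is minus the sum of the first two.\<close>

lemma field_aut_add: "field_aut f \<Longrightarrow> f (x + y) = f x + f y"
  and field_aut_mult: "field_aut f \<Longrightarrow> f (x * y) = f x * f y"
  and field_aut_one: "field_aut f \<Longrightarrow> f 1 = 1"
  and field_aut_cK: "field_aut f \<Longrightarrow> f (cK c) = cK c"
  and field_aut_bij: "field_aut f \<Longrightarrow> bij f"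
  by (simp_all add: field_aut_def)

lemma field_aut_zero: "field_aut f \<Longrightarrow> f 0 = 0"
  using field_aut_add[of f 0 0] by (metis add_cancel_right_right add_0)

lemma field_aut_minus: "field_aut f \<Longrightarrow> f (- x) = - f x"
  using field_aut_add[of f x "- x"] field_aut_zero[of f] by (simp add: eq_neg_iff_add_eq_0 add.commute)

lemma field_aut_diff: "field_aut f \<Longrightarrow> f (x - y) = f x - f y"
  using field_aut_add[of f x "- y"] field_aut_minus[of f y] by simp

lemma field_aut_inverse: "field_aut f \<Longrightarrow> f (inverse x) = inverse (f x)"
proof (cases "x = 0")
  case False
  assume f: "field_aut f"
  have "f x * f (inverse x) = 1"
    using False field_aut_mult[OF f, of x "inverse x"] field_aut_one[OF f] by simp
  then show ?thesis by (rule inverse_unique[symmetric])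
qed (simp add: field_aut_zero)

lemma field_aut_divide: "field_aut f \<Longrightarrow> f (x / y) = f x / f y"
  by (simp add: divide_inverse field_aut_mult field_aut_inverse)

lemma field_aut_power: "field_aut f \<Longrightarrow> f (x ^ n) = f x ^ n"
  by (induction n) (simp_all add: field_aut_one field_aut_mult)

lemma field_aut_power_int: "field_aut f \<Longrightarrow> f (x powi n) = f x powi n"
  by (simp add: power_int_def field_aut_power field_aut_inverse)

lemma field_aut_of_nat: "field_aut f \<Longrightarrow> f (of_nat n) = of_nat n"
  by (induction n) (simp_all add: field_aut_zero field_aut_one field_aut_add)

lemma field_aut_numeral: "field_aut f \<Longrightarrow> f (numeral k) = numeral k"
  using field_aut_of_nat[of f "numeral k"] by simp

lemma field_aut_eq_0_iff: "field_aut f \<Longrightarrow> f x = 0 \<longleftrightarrow> x = 0"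
  by (metis field_aut_bij field_aut_zero bij_is_inj injD)

lemmas field_aut_simps = field_aut_add field_aut_mult field_aut_one field_aut_cK field_aut_zero
  field_aut_minus field_aut_diff field_aut_inverse field_aut_divide field_aut_power
  field_aut_power_int field_aut_numeral

lemma field_aut_id: "field_aut id"
  by (simp add: field_aut_def)

lemma field_aut_comp: "field_aut f \<Longrightarrow> field_aut g \<Longrightarrow> field_aut (f \<circ> g)"
  by (simp add: field_aut_def bij_comp)

lemma field_aut_inv:
  assumes f: "field_aut f"
  shows "field_aut (inv f)"
proof -
  have b: "bij f" using field_aut_bij[OF f] .
  have fi: "f (inv f y) = y" and i: "inv f (f y) = y" for y
    using b by (simp_all add: bij_is_surj surj_f_inv_f bij_is_inj)
  show ?thesis unfolding field_aut_def
  proof (intro conjI allI)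
    show "bij (inv f)" using b by (rule bij_imp_bij_inv)
    show "inv f (x + y) = inv f x + inv f y" for x y by (metis fi i field_aut_add[OF f])
    show "inv f (x * y) = inv f x * inv f y" for x y by (metis fi i field_aut_mult[OF f])
    show "inv f 1 = 1" by (metis i field_aut_one[OF f])
    show "inv f (cK c) = cK c" for c by (metis i field_aut_cK[OF f])
  qed
qed

lemma field_aut_funpow: "field_aut f \<Longrightarrow> field_aut (f ^^ n)"
  by (induction n) (simp_all add: field_aut_id field_aut_comp)

lemma field_aut_zpow: "field_aut f \<Longrightarrow> field_aut (zpow f n)"
  by (simp add: zpow_def field_aut_funpow field_aut_inv)

section \<open>Automorphisms are determined by the generators\<close>

definition is_ring_hom :: "('a::ring_1 \<Rightarrow> 'b::ring_1) \<Rightarrow> bool" where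
  "is_ring_hom e \<longleftrightarrow> (\<forall>x y. e (x + y) = e x + e y) \<and> (\<forall>x y. e (x * y) = e x * e y) \<and> e 1 = 1"

definition is_subfield :: "'a::field set \<Rightarrow> bool" where
  "is_subfield S \<longleftrightarrow> 0 \<in> S \<and> 1 \<in> S \<and> (\<forall>x\<in>S. \<forall>y\<in>S. x + y \<in> S \<and> x * y \<in> S)
     \<and> (\<forall>x\<in>S. inverse x \<in> S)"

lemma is_ring_hom_id: "is_ring_hom id"
  by (simp add: is_ring_hom_def)

lemma up_add: "up (x + y) = up x + up (y :: 'a::idom)"
  and up_mult: "up (x * y) = up x * up (y :: 'a::idom)"
  and up_1: "up 1 = (1 :: 'a::idom poly fract)"
  by (simp_all add: up_def ac_simps One_fract_def one_pCons)

lemma is_ring_hom_comp_up: "is_ring_hom e \<Longrightarrow> is_ring_hom (e \<circ> up)"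
  by (simp add: is_ring_hom_def up_add up_mult up_1)

lemma is_ring_hom_zero:
  fixes e :: "'a::ring_1 \<Rightarrow> 'b::ring_1"
  shows "is_ring_hom e \<Longrightarrow> e 0 = 0"
  unfolding is_ring_hom_def by (metis add_0 add_cancel_right_right)

lemma is_ring_hom_inverse:
  fixes e :: "'a::field \<Rightarrow> 'b::field"
  assumes "is_ring_hom e"
  shows "e (inverse x) = inverse (e x)"
proof (cases "x = 0")
  case False
  then have "e x * e (inverse x) = 1"
    using assms unfolding is_ring_hom_def by (metis right_inverse)
  then show ?thesis by (rule inverse_unique[symmetric])
qed (simp add: is_ring_hom_zero[OF assms])

lemma is_subfield_agreement_set:
  "field_aut f \<Longrightarrow> field_aut g \<Longrightarrow> is_subfield {x. f x = g x}"
  by (simp add: is_subfield_def field_aut_simps)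

lemma Fract_pCons: "Fract (pCons c a) 1 = up c + var * Fract a 1"
proof -
  have "pCons c a = [:c:] + [:0, 1:] * a" by (simp add: pCons_one)
  then show ?thesis by (simp add: up_def var_def)
qed

lemma ring_hom_image_in_subfield:
  fixes e :: "'a::field poly fract \<Rightarrow> 'b::field"
  assumes e: "is_ring_hom e" and S: "is_subfield S"
    and const: "\<And>c. e (up c) \<in> S" and var: "e var \<in> S"
  shows "e x \<in> S"
proof -
  have add: "e (x + y) = e x + e y" and mult: "e (x * y) = e x * e y" for x y
    using e unfolding is_ring_hom_def by auto
  have S_closed: "x + y \<in> S" "x * y \<in> S" if "x \<in> S" "y \<in> S" for x y
    using S that unfolding is_subfield_def by auto
  have S_inverse: "inverse x \<in> S" if "x \<in> S" for x
    using S that unfolding is_subfield_def by auto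
  have poly: "e (Fract a 1) \<in> S" for a :: "'a poly"
  proof (induction a)
    case 0
    show ?case using S is_ring_hom_zero[OF e] by (simp add: Zero_fract_def[symmetric] is_subfield_def)
  next
    case (pCons c a)
    show ?case unfolding Fract_pCons add mult using pCons.IH const var S_closed by blast
  qed
  obtain a b where "x = Fract a b" "b \<noteq> 0"
    by (cases x)
  then have "x = Fract a 1 * inverse (Fract b 1)"
    by simp
  then have "e x = e (Fract a 1) * inverse (e (Fract b 1))"
    by (simp only: mult is_ring_hom_inverse[OF e])
  then show ?thesis using poly S_closed S_inverse by simp
qed

lemma field_aut_eqI:
  assumes f: "field_aut f" and g: "field_aut g"
    and "f X1 = g X1" "f X2 = g X2" "f X3 = g X3" "f X4 = g X4" "f X5 = g X5"
        "f X6 = g X6" "f X7 = g X7" "f X8 = g X8" "f X9 = g X9"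
  shows "f = g"
proof
  fix x
  let ?S = "{x. f x = g x}"
  note S = is_subfield_agreement_set[OF f g]
  have hom_K: "is_ring_hom (id :: K \<Rightarrow> K)" by (rule is_ring_hom_id)
  note hom_F8 = is_ring_hom_comp_up[OF hom_K]
  note hom_F7 = is_ring_hom_comp_up[OF hom_F8]
  note hom_F6 = is_ring_hom_comp_up[OF hom_F7]
  note hom_F5 = is_ring_hom_comp_up[OF hom_F6]
  note hom_F4 = is_ring_hom_comp_up[OF hom_F5]
  note hom_F3 = is_ring_hom_comp_up[OF hom_F4]
  note hom_F2 = is_ring_hom_comp_up[OF hom_F3]
  note hom_F1 = is_ring_hom_comp_up[OF hom_F2]
  have agree_F1: "(id \<circ> up \<circ> up \<circ> up \<circ> up \<circ> up \<circ> up \<circ> up \<circ> up) (y :: F1) \<in> ?S" for y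
    by (rule ring_hom_image_in_subfield[OF hom_F1 S])
      (use assms in \<open>simp_all add: field_aut_cK cK_def[symmetric] X1_def\<close>)
  have agree_F2: "(id \<circ> up \<circ> up \<circ> up \<circ> up \<circ> up \<circ> up \<circ> up) (y :: F2) \<in> ?S" for y
    by (rule ring_hom_image_in_subfield[OF hom_F2 S])
      (use assms agree_F1 in \<open>simp_all add: X2_def\<close>)
  have agree_F3: "(id \<circ> up \<circ> up \<circ> up \<circ> up \<circ> up \<circ> up) (y :: F3) \<in> ?S" for y
    by (rule ring_hom_image_in_subfield[OF hom_F3 S])
      (use assms agree_F2 in \<open>simp_all add: X3_def\<close>)
  have agree_F4: "(id \<circ> up \<circ> up \<circ> up \<circ> up \<circ> up) (y :: F4) \<in> ?S" for y
    by (rule ring_hom_image_in_subfield[OF hom_F4 S])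
      (use assms agree_F3 in \<open>simp_all add: X4_def\<close>)
  have agree_F5: "(id \<circ> up \<circ> up \<circ> up \<circ> up) (y :: F5) \<in> ?S" for y
    by (rule ring_hom_image_in_subfield[OF hom_F5 S])
      (use assms agree_F4 in \<open>simp_all add: X5_def\<close>)
  have agree_F6: "(id \<circ> up \<circ> up \<circ> up) (y :: F6) \<in> ?S" for y
    by (rule ring_hom_image_in_subfield[OF hom_F6 S])
      (use assms agree_F5 in \<open>simp_all add: X6_def\<close>)
  have agree_F7: "(id \<circ> up \<circ> up) (y :: F7) \<in> ?S" for y
    by (rule ring_hom_image_in_subfield[OF hom_F7 S])
      (use assms agree_F6 in \<open>simp_all add: X7_def\<close>)
  have agree_F8: "(id \<circ> up) (y :: F8) \<in> ?S" for y
    by (rule ring_hom_image_in_subfield[OF hom_F8 S])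
      (use assms agree_F7 in \<open>simp_all add: X8_def\<close>)
  have agree_K: "id (y :: K) \<in> ?S" for y
    by (rule ring_hom_image_in_subfield[OF hom_K S])
      (use assms agree_F8 in \<open>simp_all add: X9_def\<close>)
  show "f x = g x" using agree_K[of x] by simp
qed

lemma up_eq_0_iff: "up (x :: 'a::idom) = 0 \<longleftrightarrow> x = 0"
  by (simp add: up_def Zero_fract_def eq_fract)

lemma var_nonzero: "(var :: 'a::idom poly fract) \<noteq> 0"
  by (simp add: var_def Zero_fract_def eq_fract)

lemma X_nonzero: "X1 \<noteq> 0" "X2 \<noteq> 0" "X3 \<noteq> 0" "X4 \<noteq> 0" "X5 \<noteq> 0" "X6 \<noteq> 0" "X7 \<noteq> 0" "X8 \<noteq> 0" "X9 \<noteq> 0"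
  by (simp_all add: X1_def X2_def X3_def X4_def X5_def X6_def X7_def X8_def X9_def up_eq_0_iff var_nonzero)

lemma cK_nonzero: "c \<noteq> 0 \<Longrightarrow> cK c \<noteq> 0"
  by (simp add: cK_def up_eq_0_iff)

lemma zpow_0 [simp]: "zpow f 0 = id"
  and zpow_1: "zpow f 1 = f"
  and zpow_minus_1: "zpow f (- 1) = inv f"
  by (simp_all add: zpow_def)

lemma zpow_add_1:
  assumes "bij f"
  shows "zpow f (n + 1) = f \<circ> zpow f n"
proof (cases "n \<ge> 0")
  case True
  then have "nat (n + 1) = Suc (nat n)" by simp
  then show ?thesis using True by (simp add: zpow_def)
next
  case False
  then have "nat (- n) = Suc (nat (- (n + 1)))" by simp
  moreover have "f \<circ> inv f = id"
    using assms bij_is_surj surj_iff by blast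
  ultimately show ?thesis
    using False by (simp add: zpow_def funpow_Suc_right[symmetric] comp_assoc[symmetric])
qed

lemma zpow_diff_1:
  assumes "bij f"
  shows "zpow f (n - 1) = inv f \<circ> zpow f n"
proof -
  have "inv f \<circ> f = id"
    using assms bij_is_inj inj_iff by blast
  moreover have "zpow f n = f \<circ> zpow f (n - 1)"
    using zpow_add_1[OF assms, of "n - 1"] by simp
  ultimately show ?thesis by (simp add: comp_assoc[symmetric])
qed

lemma zpow_add:
  assumes "bij f"
  shows "zpow f (a + b) = zpow f a \<circ> zpow f b"
proof (induction a rule: int_induct[where k = 0])
  case (step1 i)
  have "zpow f (i + 1 + b) = zpow f ((i + b) + 1)" by (simp add: ac_simps)
  then show ?case using step1 by (simp add: zpow_add_1[OF assms] comp_assoc)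
next
  case (step2 i)
  have "zpow f (i - 1 + b) = zpow f ((i + b) - 1)" by (simp add: algebra_simps)
  then show ?case using step2 by (simp add: zpow_diff_1[OF assms] comp_assoc)
qed simp

lemma comp_commute_comp:
  "h \<circ> f = f \<circ> h \<Longrightarrow> h \<circ> g = g \<circ> h \<Longrightarrow> h \<circ> (f \<circ> g) = (f \<circ> g) \<circ> h"
  by (simp add: fun_eq_iff)

lemma inv_commute:
  assumes "bij g" "h \<circ> g = g \<circ> h"
  shows "h \<circ> inv g = inv g \<circ> h"
proof
  fix y
  have "g (h (inv g y)) = h (g (inv g y))"
    using fun_cong[OF assms(2)] by simp
  also have "\<dots> = h y"
    using assms(1) by (simp add: bij_is_surj surj_f_inv_f)
  finally show "(h \<circ> inv g) y = (inv g \<circ> h) y"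
    using assms(1) by (simp add: bij_inv_eq_iff)
qed

lemma zpow_commute_right:
  assumes "bij g" "h \<circ> g = g \<circ> h"
  shows "h \<circ> zpow g b = zpow g b \<circ> h"
proof (induction b rule: int_induct[where k = 0])
  case (step1 i)
  show ?case
    unfolding zpow_add_1[OF assms(1)] by (rule comp_commute_comp[OF assms(2) step1(2)])
next
  case (step2 i)
  show ?case
    unfolding zpow_diff_1[OF assms(1)] by (rule comp_commute_comp[OF inv_commute[OF assms] step2(2)])
qed simp

lemma zpow_commute:
  assumes "bij f" "bij g" "f \<circ> g = g \<circ> f"
  shows "zpow f a \<circ> zpow g b = zpow g b \<circ> zpow f a"
proof -
  have "g \<circ> zpow f a = zpow f a \<circ> g"
    by (rule zpow_commute_right[OF assms(1) assms(3)[symmetric]])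
  then show ?thesis
    by (rule zpow_commute_right[OF assms(2) sym])
qed

lemma zpow_eigenvector:
  assumes f: "field_aut f" and "f x = c * x" and "f c = c" and "c \<noteq> 0"
  shows "zpow f n x = c powi n * x"
proof (induction n rule: int_induct[where k = 0])
  case (step1 i)
  then show ?case
    using assms by (simp add: zpow_add_1 field_aut_bij field_aut_simps power_int_add)
next
  case (step2 i)
  have "f (c powi (i - 1) * x) = c powi i * x"
    using assms by (simp add: field_aut_simps power_int_diff)
  then have "inv f (c powi i * x) = c powi (i - 1) * x"
    using field_aut_bij[OF f] by (metis bij_inv_eq_iff)
  then show ?case using step2 by (simp add: zpow_diff_1 field_aut_bij[OF f])
qed simp

lemma tauNM_translate:
  assumes bij: "bij T1" "bij T2" "bij T4"
    and comm: "T1 \<circ> T2 = T2 \<circ> T1" "T1 \<circ> T4 = T4 \<circ> T1" "T2 \<circ> T4 = T4 \<circ> T2"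
  shows "tauNM T1 T2 T4 (n + a) (m + b) N
    = (zpow T1 n \<circ> zpow T2 m \<circ> zpow T4 N) (tauNM T1 T2 T4 a b 0)"
proof -
  have c12: "zpow T1 a (zpow T2 b x) = zpow T2 b (zpow T1 a x)"
    and c14: "zpow T1 a (zpow T4 b x) = zpow T4 b (zpow T1 a x)"
    and c24: "zpow T2 a (zpow T4 b x) = zpow T4 b (zpow T2 a x)" for a b x
    using zpow_commute[OF bij(1,2) comm(1)] zpow_commute[OF bij(1,3) comm(2)]
      zpow_commute[OF bij(2,3) comm(3)] by (metis comp_apply)+
  have "tauNM T1 T2 T4 (n + a) (m + b) N
      = zpow T1 n (zpow T1 a (zpow T2 m (zpow T2 b (zpow T4 N (tau 1)))))"
    by (simp add: tauNM_def zpow_add[OF bij(1)] zpow_add[OF bij(2)])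
  also have "\<dots> = zpow T1 n (zpow T2 m (zpow T4 N (zpow T1 a (zpow T2 b (tau 1)))))"
    by (simp only: c12 c14 c24)
  finally show ?thesis by (simp add: tauNM_def)
qed

lemma power_int_affine:
  fixes x :: "'a::field"
  assumes "x \<noteq> 0"
  shows "x powi (i * n + j * m + k) = (x powi n) powi i * (x powi m) powi j * x powi k"
proof -
  have "x powi (i * n) = (x powi n) powi i" "x powi (j * m) = (x powi m) powi j"
    by (metis mult.commute power_int_mult)+
  then show ?thesis using assms by (simp add: power_int_add)
qed

section \<open>The action on \<open>K\<close> and its translations\<close>

locale weyl_group_action =
  fixes Q :: complex
    and s :: "int \<Rightarrow> K \<Rightarrow> K"
    and p w0 r :: "K \<Rightarrow> K"
  assumes Q_nz: "Q \<noteq> 0"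
    and aut: "\<forall>i\<in>{0,1,2}. field_aut (s i)" "field_aut p" "field_aut w0" "field_aut r"
    and s_alpha_i: "\<forall>i\<in>{0,1,2}. s i (alpha Q i) = inverse (alpha Q i)"
    and s_alpha_j: "\<forall>i\<in>{0,1,2}. \<forall>j\<in>{0,1,2}. j \<noteq> i \<longrightarrow> s i (alpha Q j) = alpha Q j * alpha Q i"
    and s_gam: "\<forall>i\<in>{0,1,2}. s i gam = gam"
    and s_tau_i: "\<forall>i\<in>{0,1,2}. s i (tau i) =
          (uu Q i * tau (i+1) * taub (i-1) + taub (i+1) * tau (i-1))
          / (cK Q powi (-1) * gam powi (-2) * alpha Q i ^ 3 * taub i)"
    and s_taub_i: "\<forall>i\<in>{0,1,2}. s i (taub i) =
          (vv Q i * taub (i+1) * tau (i-1) + tau (i+1) * taub (i-1))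
          / (cK Q * gam ^ 2 * alpha Q i ^ 3 * tau i)"
    and s_tau_j: "\<forall>i\<in>{0,1,2}. \<forall>j\<in>{0,1,2}. j \<noteq> i \<longrightarrow> s i (tau j) = tau j \<and> s i (taub j) = taub j"
    and p_alpha: "\<forall>j\<in>{0,1,2}. p (alpha Q j) = alpha Q (j+1)"
    and p_gam: "p gam = gam"
    and p_tau: "\<forall>i\<in>{0,1,2}. p (tau i) = tau (i+1) \<and> p (taub i) = taub (i+1)"
    and w0_alpha: "\<forall>j\<in>{0,1,2}. w0 (alpha Q j) = alpha Q j"
    and w0_gam: "w0 gam = inverse gam"
    and w0_tau: "\<forall>i\<in>{0,1,2}. w0 (tau i) = tau i"
    and w0_taub: "\<forall>i\<in>{0,1,2}. w0 (taub i) =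
          alpha Q (i+1) ^ 2 * (taub i * tau (i+1) * tau (i+2) + uu Q (i-1) * tau i * taub (i+1) * tau (i+2)
             + inverse (uu Q (i+1)) * tau i * tau (i+1) * taub (i+2))
          / (alpha Q (i+2) ^ 2 * taub (i+1) * taub (i+2))"
    and r_alpha: "\<forall>j\<in>{0,1,2}. r (alpha Q j) = alpha Q j"
    and r_gam: "r gam = cK Q powi (-1) * inverse gam"
    and r_tau: "\<forall>i\<in>{0,1,2}. r (tau i) = taub i \<and> r (taub i) = tau i"
begin

abbreviation "q \<equiv> cK Q"

lemma q_nonzero: "q \<noteq> 0"
  using Q_nz cK_nonzero by simp

lemmas X_q_nonzero = X_nonzero q_nonzero

lemma alpha_nonzero: "alpha Q i \<noteq> 0"
  by (simp add: alpha_def X_q_nonzero)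

lemma field_aut_generators: "field_aut (s 0)" "field_aut (s 1)" "field_aut (s 2)"
  "field_aut p" "field_aut w0" "field_aut r"
  using aut by auto

lemma s_monomial_images:
  "s 0 X1 = inverse X1" "s 0 X2 = X2 * X1" "s 0 X3 = X3" "s 0 X5 = X5" "s 0 X6 = X6" "s 0 X8 = X8" "s 0 X9 = X9"
  "s 1 X1 = X1 * X2" "s 1 X2 = inverse X2" "s 1 X3 = X3" "s 1 X4 = X4" "s 1 X6 = X6" "s 1 X7 = X7" "s 1 X9 = X9"
  "s 2 X1 = X1 * (q * inverse X1 * inverse X2)" "s 2 X2 = X2 * (q * inverse X1 * inverse X2)"
  "s 2 X3 = X3" "s 2 X4 = X4" "s 2 X5 = X5" "s 2 X7 = X7" "s 2 X8 = X8"
  using s_alpha_i s_alpha_j s_gam s_tau_j by (auto simp: alpha_def gam_def tau_def taub_def)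

lemma p_images: "p X1 = X2" "p X2 = q * inverse X1 * inverse X2" "p X3 = X3"
   "p X4 = X5" "p X5 = X6" "p X6 = X4" "p X7 = X8" "p X8 = X9" "p X9 = X7"
  using p_alpha p_gam p_tau by (auto simp: alpha_def gam_def tau_def taub_def)

lemma r_images: "r X1 = X1" "r X2 = X2" "r X3 = inverse q * inverse X3"
   "r X4 = X7" "r X5 = X8" "r X6 = X9" "r X7 = X4" "r X8 = X5" "r X9 = X6"
  using r_alpha r_gam r_tau by (auto simp: alpha_def gam_def tau_def taub_def)

lemma w0_monomial_images: "w0 X1 = X1" "w0 X2 = X2" "w0 X3 = inverse X3" "w0 X4 = X4" "w0 X5 = X5" "w0 X6 = X6"
  using w0_alpha w0_gam w0_tau by (auto simp: alpha_def gam_def tau_def)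

lemmas monomial_images = s_monomial_images p_images r_images w0_monomial_images

lemma rational_images:
  "s 0 X4 = (inverse (q^2) * inverse (X3^4) * X1^6 * X5 * X9 + X8 * X6)
            / (inverse q * inverse (X3^2) * X1^3 * X7)"
  "s 0 X7 = (q^2 * X3^4 * X1^6 * X8 * X6 + X5 * X9) / (q * X3^2 * X1^3 * X4)"
  "s 1 X5 = (inverse (q^2) * inverse (X3^4) * X2^6 * X6 * X7 + X9 * X4)
            / (inverse q * inverse (X3^2) * X2^3 * X8)"
  "s 1 X8 = (q^2 * X3^4 * X2^6 * X9 * X4 + X6 * X7) / (q * X3^2 * X2^3 * X5)"
  "s 2 X6 = (inverse (q^2) * inverse (X3^4) * (q * inverse X1 * inverse X2)^6 * X4 * X8 + X7 * X5)
            / (inverse q * inverse (X3^2) * (q * inverse X1 * inverse X2)^3 * X9)"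
  "s 2 X9 = (q^2 * X3^4 * (q * inverse X1 * inverse X2)^6 * X7 * X5 + X4 * X8)
            / (q * X3^2 * (q * inverse X1 * inverse X2)^3 * X6)"
  "w0 X7 = X2^2 * (X7 * X5 * X6
             + inverse (q^2) * inverse (X3^4) * (q * inverse X1 * inverse X2)^6 * X4 * X8 * X6
             + q^2 * X3^4 * inverse (X2^6) * X4 * X5 * X9)
           / ((q * inverse X1 * inverse X2)^2 * X8 * X9)"
  "w0 X8 = (q * inverse X1 * inverse X2)^2 * (X8 * X6 * X4
             + inverse (q^2) * inverse (X3^4) * X1^6 * X5 * X9 * X4
             + q^2 * X3^4 * inverse ((q * inverse X1 * inverse X2)^6) * X5 * X6 * X7)
           / (X1^2 * X9 * X7)"
  "w0 X9 = X1^2 * (X9 * X4 * X5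
             + inverse (q^2) * inverse (X3^4) * X2^6 * X6 * X7 * X5
             + q^2 * X3^4 * inverse (X1^6) * X6 * X4 * X8)
           / (X2^2 * X7 * X8)"
  using s_tau_i[rule_format, of 0] s_taub_i[rule_format, of 0]
    s_tau_i[rule_format, of 1] s_taub_i[rule_format, of 1]
    s_tau_i[rule_format, of 2] s_taub_i[rule_format, of 2]
    w0_taub[rule_format, of 0] w0_taub[rule_format, of 1] w0_taub[rule_format, of 2]
  by (simp_all add: alpha_def tau_def taub_def uu_def vv_def gam_def power_int_minus power_int_numeral)

text \<open>Each relation is checked on the nine generators. The images of the generators are
  substituted one layer at a time, clearing denominators in between: all denominators stay products
  of generators and their images, which are nonzero, while sums only ever occur in numerators.\<close>

lemma
  shows s_involutive: "s 0 \<circ> s 0 = id" "s 1 \<circ> s 1 = id" "s 2 \<circ> s 2 = id"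
    and s0_s1_braid: "s 0 \<circ> s 1 \<circ> s 0 = s 1 \<circ> s 0 \<circ> s 1"
    and p_s_conj: "p \<circ> s 0 = s 1 \<circ> p" "p \<circ> s 1 = s 2 \<circ> p" "p \<circ> s 2 = s 0 \<circ> p"
    and r_commute: "r \<circ> p = p \<circ> r" "r \<circ> s 1 = s 1 \<circ> r" "r \<circ> s 2 = s 2 \<circ> r"
    and w0_commute: "w0 \<circ> p = p \<circ> w0" "w0 \<circ> s 1 = s 1 \<circ> w0" "w0 \<circ> s 2 = s 2 \<circ> w0"
  by (rule field_aut_eqI;
      simp add: field_aut_comp field_aut_id field_aut_generators field_aut_simps monomial_images X_q_nonzero;
      (simp only: rational_images)?;
      (simp add: field_aut_generators field_aut_simps monomial_images)?;
      (simp add: field_simps X_q_nonzero field_aut_eq_0_iff field_aut_generators)?;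
      (simp add: rational_images field_aut_generators field_aut_simps monomial_images field_simps
         X_q_nonzero field_aut_eq_0_iff)?;
      algebra)+

definition "T1 = p \<circ> s 2 \<circ> s 1"
definition "T2 = s 1 \<circ> p \<circ> s 2"
definition "T4 = r \<circ> w0"

lemma T1_T2_commute: "T1 \<circ> T2 = T2 \<circ> T1"
proof -
  have "s 0 (s 0 x) = x" "s 1 (s 1 x) = x" "s 0 (s 1 (s 0 x)) = s 1 (s 0 (s 1 x))"
    "p (s 0 x) = s 1 (p x)" "p (s 1 x) = s 2 (p x)" "p (s 2 x) = s 0 (p x)" for x
    using s_involutive s0_s1_braid p_s_conj by (simp_all add: fun_eq_iff)
  then show ?thesis by (simp add: T1_def T2_def fun_eq_iff)
qed

lemma T4_commute: "T4 \<circ> p = p \<circ> T4" "T4 \<circ> s 1 = s 1 \<circ> T4" "T4 \<circ> s 2 = s 2 \<circ> T4"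
  using r_commute w0_commute by (simp_all add: T4_def fun_eq_iff)

lemma T1_T4_commute: "T1 \<circ> T4 = T4 \<circ> T1"
  unfolding T1_def
  by (rule comp_commute_comp[OF comp_commute_comp[OF T4_commute(1,3)] T4_commute(2), symmetric])

lemma T2_T4_commute: "T2 \<circ> T4 = T4 \<circ> T2"
  unfolding T2_def
  by (rule comp_commute_comp[OF comp_commute_comp[OF T4_commute(2,1)] T4_commute(3), symmetric])

lemma field_aut_translations: "field_aut T1" "field_aut T2" "field_aut T4"
  by (simp_all add: T1_def T2_def T4_def field_aut_comp field_aut_generators)

lemma tau_near_origin:
  "tauNM T1 T2 T4 0 0 0 = X5"
  "tauNM T1 T2 T4 1 0 0 = p (s 2 (s 1 X5))"
  "tauNM T1 T2 T4 (-1) 0 0 = X4"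
  "tauNM T1 T2 T4 0 1 0 = X6"
  "tauNM T1 T2 T4 0 (-1) 0 = s 2 (p (s 2 X6))"
  "tauNM T1 T2 T4 1 1 0 = p (s 2 X6)"
  "tauNM T1 T2 T4 (-1) (-1) 0 = s 2 X6"
proof -
  have inj: "inj T1" "inj T2"
    using field_aut_translations field_aut_bij bij_is_inj by blast+
  have "s 2 (s 2 x) = x" "s 1 (s 1 x) = x" "p (s 2 x) = s 0 (p x)" "p (s 0 x) = s 1 (p x)" for x
    using s_involutive p_s_conj by (simp_all add: fun_eq_iff)
  then have "T1 X4 = X5" "T2 (s 2 (p (s 2 X6))) = X5" "T2 (s 2 X6) = X4"
    by (simp_all add: T1_def T2_def monomial_images)
  moreover have "T2 (T1 (s 2 X6)) = T1 (T2 (s 2 X6))"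
    using T1_T2_commute by (metis comp_apply)
  ultimately have "inv T1 X5 = X4" "inv T2 X5 = s 2 (p (s 2 X6))" "inv T1 (inv T2 X5) = s 2 X6"
    using inj inv_f_eq inv_f_f by metis+
  then show
    "tauNM T1 T2 T4 0 0 0 = X5"
    "tauNM T1 T2 T4 1 0 0 = p (s 2 (s 1 X5))"
    "tauNM T1 T2 T4 (-1) 0 0 = X4"
    "tauNM T1 T2 T4 0 1 0 = X6"
    "tauNM T1 T2 T4 0 (-1) 0 = s 2 (p (s 2 X6))"
    "tauNM T1 T2 T4 1 1 0 = p (s 2 X6)"
    "tauNM T1 T2 T4 (-1) (-1) 0 = s 2 X6"
    using inj by (simp_all add: tauNM_def tau_def zpow_1 zpow_minus_1 T1_def T2_def monomial_images)
qed

definition "translation n m N = zpow T1 n \<circ> zpow T2 m \<circ> zpow T4 N"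

lemma field_aut_translation: "field_aut (translation n m N)"
  by (simp add: translation_def field_aut_comp field_aut_zpow field_aut_translations)

lemma translation_tau:
  "translation n m N (tauNM T1 T2 T4 a b 0) = tauNM T1 T2 T4 (n + a) (m + b) N"
  unfolding translation_def
  by (rule tauNM_translate[symmetric])
    (use field_aut_translations field_aut_bij T1_T2_commute T1_T4_commute T2_T4_commute in auto)

lemma translation_alpha:
  "translation n m N (alpha Q 0) = q powi n * alpha Q 0"
  "translation n m N (alpha Q 1) = q powi m / q powi n * alpha Q 1"
  "translation n m N (alpha Q 2) = alpha Q 2 / q powi m"
proof -
  have scale: "zpow f k x = c powi k * x"
    if "f \<in> {T1, T2, T4}" "f x = c * x" "f c = c" "c \<noteq> 0" for f k x c
    using zpow_eigenvector field_aut_translations that by blast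
  have T_q: "T1 q = q" "T1 (inverse q) = inverse q" "T2 q = q"
    using field_aut_translations by (simp_all add: field_aut_simps)
  have "T1 X1 = q * X1" "T1 X2 = inverse q * X2" "T2 X1 = 1 * X1" "T2 X2 = q * X2"
    "T4 X1 = 1 * X1" "T4 X2 = 1 * X2"
    by (simp_all add: T1_def T2_def T4_def field_aut_simps field_aut_generators monomial_images
        field_simps X_q_nonzero)
  then have "zpow T1 n X1 = q powi n * X1" "zpow T1 n X2 = inverse q powi n * X2"
    "zpow T2 m X1 = X1" "zpow T2 m X2 = q powi m * X2" "zpow T4 N X1 = X1" "zpow T4 N X2 = X2"
    using scale[of T1 X1 q n] scale[of T1 X2 "inverse q" n] scale[of T2 X1 1 m]
      scale[of T2 X2 q m] scale[of T4 X1 1 N] scale[of T4 X2 1 N]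
    by (simp_all add: T_q field_aut_one field_aut_translations q_nonzero)
  then have "translation n m N X1 = q powi n * X1" "translation n m N X2 = q powi m / q powi n * X2"
    using field_aut_zpow[OF field_aut_translations(1), of n]
    by (simp_all add: translation_def field_aut_simps power_int_inverse field_simps)
  then show "translation n m N (alpha Q 0) = q powi n * alpha Q 0"
    "translation n m N (alpha Q 1) = q powi m / q powi n * alpha Q 1"
    "translation n m N (alpha Q 2) = alpha Q 2 / q powi m"
    using field_aut_translation[of n m N]
    by (simp_all add: alpha_def field_aut_simps X_q_nonzero power_int_not_zero field_simps)
qed

section \<open>The bilinear equations\<close>

definition bilinear1 :: "int \<Rightarrow> int \<Rightarrow> int \<Rightarrow> K" where
  "bilinear1 n m N =
     (q powi (4*n-8*m+4) * alpha Q 1 powi (-4) * alpha Q 2 ^ 4 - q powi (4*n+4*m) * alpha Q 0 ^ 4 * alpha Q 2 powi (-4))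
       * (tauNM T1 T2 T4 n m N) ^ 2
     + q powi (n+m) * alpha Q 0 * inverse (alpha Q 2) * tauNM T1 T2 T4 (n+1) (m+1) N * tauNM T1 T2 T4 (n-1) (m-1) N
     - q powi (n-2*m+1) * inverse (alpha Q 1) * alpha Q 2 * tauNM T1 T2 T4 n (m+1) N * tauNM T1 T2 T4 n (m-1) N"

definition bilinear2 :: "int \<Rightarrow> int \<Rightarrow> int \<Rightarrow> K" where
  "bilinear2 n m N =
     (q powi (4*n+4*m) * alpha Q 0 ^ 4 * alpha Q 2 powi (-4) - q powi (-8*n+4*m-4) * alpha Q 0 powi (-4) * alpha Q 1 ^ 4)
       * (tauNM T1 T2 T4 n m N) ^ 2
     + q powi (-2*n+m-1) * inverse (alpha Q 0) * alpha Q 1 * tauNM T1 T2 T4 (n+1) m N * tauNM T1 T2 T4 (n-1) m N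
     - q powi (n+m) * alpha Q 0 * inverse (alpha Q 2) * tauNM T1 T2 T4 (n+1) (m+1) N * tauNM T1 T2 T4 (n-1) (m-1) N"

definition bilinear3 :: "int \<Rightarrow> int \<Rightarrow> int \<Rightarrow> K" where
  "bilinear3 n m N =
     (q powi (-8*n+4*m-4) * alpha Q 0 powi (-4) * alpha Q 1 ^ 4 - q powi (4*n-8*m+4) * alpha Q 1 powi (-4) * alpha Q 2 ^ 4)
       * (tauNM T1 T2 T4 n m N) ^ 2
     - q powi (-2*n+m-1) * inverse (alpha Q 0) * alpha Q 1 * tauNM T1 T2 T4 (n+1) m N * tauNM T1 T2 T4 (n-1) m N
     + q powi (n-2*m+1) * inverse (alpha Q 1) * alpha Q 2 * tauNM T1 T2 T4 n (m+1) N * tauNM T1 T2 T4 n (m-1) N"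

lemma bilinear3_eq: "bilinear3 n m N = - bilinear1 n m N - bilinear2 n m N"
  by (simp add: bilinear1_def bilinear2_def bilinear3_def algebra_simps)

lemma bilinear1_origin: "bilinear1 0 0 0 = 0"
  unfolding bilinear1_def
  by (simp add: tau_near_origin alpha_def rational_images field_aut_simps monomial_images
      field_aut_generators power_int_minus;
      simp add: field_simps X_q_nonzero; algebra)

lemma bilinear2_origin: "bilinear2 0 0 0 = 0"
  unfolding bilinear2_def
  by (simp add: tau_near_origin alpha_def rational_images field_aut_simps monomial_images
      field_aut_generators power_int_minus;
      simp add: field_simps X_q_nonzero; algebra)

lemma bilinear1_translate: "bilinear1 n m N = translation n m N (bilinear1 0 0 0)"
proof -
  define A B where "A = q powi n" and "B = q powi m"
  have "A \<noteq> 0" "B \<noteq> 0"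
    using q_nonzero by (simp_all add: A_def B_def power_int_not_zero)
  have exponents: "q powi (4*n-8*m+4) = A ^ 4 * B powi (-8) * q ^ 4" "q powi (4*n+4*m) = A ^ 4 * B ^ 4"
    "q powi (n+m) = A * B" "q powi (n-2*m+1) = A * B powi (-2) * q"
    using power_int_affine[OF q_nonzero, of 4 n "-8" m 4] power_int_affine[OF q_nonzero, of 4 n 4 m 0]
      power_int_affine[OF q_nonzero, of 1 n 1 m 0] power_int_affine[OF q_nonzero, of 1 n "-2" m 1]
    by (simp_all add: A_def B_def algebra_simps)
  show ?thesis
    unfolding bilinear1_def exponents
    by (simp add: field_aut_simps field_aut_translation translation_tau translation_alpha flip: A_def B_def;
        simp add: field_simps power_int_minus alpha_nonzero \<open>A \<noteq> 0\<close> \<open>B \<noteq> 0\<close>; algebra)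
qed

lemma bilinear2_translate: "bilinear2 n m N = translation n m N (bilinear2 0 0 0)"
proof -
  define A B where "A = q powi n" and "B = q powi m"
  have "A \<noteq> 0" "B \<noteq> 0"
    using q_nonzero by (simp_all add: A_def B_def power_int_not_zero)
  have exponents: "q powi (4*n+4*m) = A ^ 4 * B ^ 4" "q powi (-8*n+4*m-4) = A powi (-8) * B ^ 4 * q powi (-4)"
    "q powi (-2*n+m-1) = A powi (-2) * B * q powi (-1)" "q powi (n+m) = A * B"
    using power_int_affine[OF q_nonzero, of 4 n 4 m 0] power_int_affine[OF q_nonzero, of "-8" n 4 m "-4"]
      power_int_affine[OF q_nonzero, of "-2" n 1 m "-1"] power_int_affine[OF q_nonzero, of 1 n 1 m 0]
    by (simp_all add: A_def B_def algebra_simps)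
  show ?thesis
    unfolding bilinear2_def exponents
    by (simp add: field_aut_simps field_aut_translation translation_tau translation_alpha flip: A_def B_def;
        simp add: field_simps power_int_minus alpha_nonzero \<open>A \<noteq> 0\<close> \<open>B \<noteq> 0\<close>; algebra)
qed

lemma bilinear_equations: "bilinear1 n m N = 0" "bilinear2 n m N = 0" "bilinear3 n m N = 0"
proof -
  show "bilinear1 n m N = 0" "bilinear2 n m N = 0"
    unfolding bilinear1_translate[of n m N] bilinear2_translate[of n m N] bilinear1_origin bilinear2_origin
    by (simp_all add: field_aut_zero field_aut_translation)
  then show "bilinear3 n m N = 0"
    by (simp add: bilinear3_eq)
qed

end

theorem propositionB3:
  fixes Q :: complex
    and s :: "int \<Rightarrow> K \<Rightarrow> K"
    and p w0 w1 r :: "K \<Rightarrow> K"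
  assumes Q_nz: "Q \<noteq> 0"
    and Q_generic: "\<forall>k::nat. 0 < k \<longrightarrow> Q ^ k \<noteq> 1"
    and aut: "\<forall>i\<in>{0,1,2}. field_aut (s i)" "field_aut p" "field_aut w0" "field_aut w1" "field_aut r"
    and s_alpha_i: "\<forall>i\<in>{0,1,2}. s i (alpha Q i) = inverse (alpha Q i)"
    and s_alpha_j: "\<forall>i\<in>{0,1,2}. \<forall>j\<in>{0,1,2}. j \<noteq> i \<longrightarrow> s i (alpha Q j) = alpha Q j * alpha Q i"
    and s_gam: "\<forall>i\<in>{0,1,2}. s i gam = gam"
    and s_tau_i: "\<forall>i\<in>{0,1,2}. s i (tau i) =
          (uu Q i * tau (i+1) * taub (i-1) + taub (i+1) * tau (i-1))
          / (cK Q powi (-1) * gam powi (-2) * alpha Q i ^ 3 * taub i)"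
    and s_taub_i: "\<forall>i\<in>{0,1,2}. s i (taub i) =
          (vv Q i * taub (i+1) * tau (i-1) + tau (i+1) * taub (i-1))
          / (cK Q * gam ^ 2 * alpha Q i ^ 3 * tau i)"
    and s_tau_j: "\<forall>i\<in>{0,1,2}. \<forall>j\<in>{0,1,2}. j \<noteq> i \<longrightarrow> s i (tau j) = tau j \<and> s i (taub j) = taub j"
    and p_alpha: "\<forall>j\<in>{0,1,2}. p (alpha Q j) = alpha Q (j+1)"
    and p_gam: "p gam = gam"
    and p_tau: "\<forall>i\<in>{0,1,2}. p (tau i) = tau (i+1) \<and> p (taub i) = taub (i+1)"
    and w0_alpha: "\<forall>j\<in>{0,1,2}. w0 (alpha Q j) = alpha Q j"
    and w0_gam: "w0 gam = inverse gam"
    and w0_tau: "\<forall>i\<in>{0,1,2}. w0 (tau i) = tau i"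
    and w0_taub: "\<forall>i\<in>{0,1,2}. w0 (taub i) =
          alpha Q (i+1) ^ 2 * (taub i * tau (i+1) * tau (i+2) + uu Q (i-1) * tau i * taub (i+1) * tau (i+2)
             + inverse (uu Q (i+1)) * tau i * tau (i+1) * taub (i+2))
          / (alpha Q (i+2) ^ 2 * taub (i+1) * taub (i+2))"
    and w1_alpha: "\<forall>j\<in>{0,1,2}. w1 (alpha Q j) = alpha Q j"
    and w1_gam: "w1 gam = cK Q powi (-2) * inverse gam"
    and w1_taub: "\<forall>i\<in>{0,1,2}. w1 (taub i) = taub i"
    and w1_tau: "\<forall>i\<in>{0,1,2}. w1 (tau i) =
          alpha Q (i+1) ^ 2 * (tau i * taub (i+1) * taub (i+2) + vv Q (i-1) * taub i * tau (i+1) * taub (i+2)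
             + inverse (vv Q (i+1)) * taub i * taub (i+1) * tau (i+2))
          / (alpha Q (i+2) ^ 2 * tau (i+1) * tau (i+2))"
    and r_alpha: "\<forall>j\<in>{0,1,2}. r (alpha Q j) = alpha Q j"
    and r_gam: "r gam = cK Q powi (-1) * inverse gam"
    and r_tau: "\<forall>i\<in>{0,1,2}. r (tau i) = taub i \<and> r (taub i) = tau i"
  shows "\<forall>n m N :: int.
     let T1 = p \<circ> s 2 \<circ> s 1; T2 = s 1 \<circ> p \<circ> s 2; T4 = r \<circ> w0;
         t = tauNM T1 T2 T4; q = cK Q; a0 = alpha Q 0; a1 = alpha Q 1; a2 = alpha Q 2 in
     (q powi (4*n-8*m+4) * a1 powi (-4) * a2 ^ 4 - q powi (4*n+4*m) * a0 ^ 4 * a2 powi (-4))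
        * (t n m N) ^ 2
       + q powi (n+m) * a0 * inverse a2 * t (n+1) (m+1) N * t (n-1) (m-1) N
       - q powi (n-2*m+1) * inverse a1 * a2 * t n (m+1) N * t n (m-1) N = 0
   \<and> (q powi (4*n+4*m) * a0 ^ 4 * a2 powi (-4) - q powi (-8*n+4*m-4) * a0 powi (-4) * a1 ^ 4)
        * (t n m N) ^ 2
       + q powi (-2*n+m-1) * inverse a0 * a1 * t (n+1) m N * t (n-1) m N
       - q powi (n+m) * a0 * inverse a2 * t (n+1) (m+1) N * t (n-1) (m-1) N = 0
   \<and> (q powi (-8*n+4*m-4) * a0 powi (-4) * a1 ^ 4 - q powi (4*n-8*m+4) * a1 powi (-4) * a2 ^ 4)
        * (t n m N) ^ 2
       - q powi (-2*n+m-1) * inverse a0 * a1 * t (n+1) m N * t (n-1) m N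
       + q powi (n-2*m+1) * inverse a1 * a2 * t n (m+1) N * t n (m-1) N = 0"
proof -
  interpret weyl_group_action Q s p w0 r
    by (rule weyl_group_action.intro) (fact assms)+
  show ?thesis
    unfolding Let_def T1_def[symmetric] T2_def[symmetric] T4_def[symmetric]
      bilinear1_def[symmetric] bilinear2_def[symmetric] bilinear3_def[symmetric]
    by (simp add: bilinear_equations)
qed

end
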